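(* For an $E$-linear code $C$ of length $2n$, $C^{\perp_{S_L}}=C^{\perp_S}$ if and only if $C$ is left symplectic nice. Equivalently, $C^{\perp_{S_L}}=C^{\perp_S}$ if and only if $C$ is free.
   Context: $E=\langle \kappa,\tau \mid 2\kappa=2\tau=0,\ \kappa^2=\kappa,\ \tau^2=\tau,\ \kappa\tau=\kappa,\ \tau\kappa=\tau\rangle$ is the non-unital ring $\{0,\kappa,\tau,\zeta\}$ ($|E|=4$), $\zeta=\kappa+\tau$, with $e\kappa=e\tau=e$, $e\zeta=0$ for all $e\in E$. Every $e\in E$ is uniquely $u\kappa+v\zeta$ ($u,v\in\mathbb{F}_2$); $\pi(u\kappa+v\zeta)=u$, componentwise. An $E$-linear code of length $2n$ is a left $E$-submodule $C\subseteq E^{2n}$; $C_{Res}=\pi(C)$, $C_{Tor}=\{v\in\mathbb{F}_2^{2n}:\zeta v\in C\}$ (componentwise, $0\cdot\zeta=0,1\cdot\zeta=\zeta$); $C$ is free if $C_{Res}=C_{Tor}$. Symplectic inner product: $\langle (u|v),(u'|v')\rangle_s=\sum_i u_iv'_i+\sum_i v_iu'_i$. $C^{\perp_{S_L}}=\{z\in E^{2n}:\langle z,w\rangle_s=0\ \forall w\in C\}$, $C^{\perp_{S_R}}=\{z\in E^{2n}:\langle w,z\rangle_s=0\ \forall w\in C\}$, $C^{\perp_S}=C^{\perp_{S_L}}\cap C^{\perp_{S_R}}$. $C$ is left symplectic nice if $|C|\,|C^{\perp_{S_L}}|=|E|^{2n}$. *)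

theory Defs
  imports Main
begin

text \<open>Additively E is F2 x F2 with basis kappa, zeta: 0 = (0,0), kappa = (1,0),
  zeta = (0,1), tau = kappa + zeta = (1,1).\<close>

datatype E = E0 | Kap | Tau | Zet

fun E_enc :: "E \<Rightarrow> bool \<times> bool" where
  "E_enc E0 = (False, False)"
| "E_enc Kap = (True, False)"
| "E_enc Zet = (False, True)"
| "E_enc Tau = (True, True)"

definition E_dec :: "bool \<times> bool \<Rightarrow> E" where
  "E_dec p = (case p of (False, False) \<Rightarrow> E0 | (True, False) \<Rightarrow> Kap
              | (False, True) \<Rightarrow> Zet | (True, True) \<Rightarrow> Tau)"

lemma E_dec_enc[simp]: "E_dec (E_enc x) = x"
  by (cases x) (auto simp: E_dec_def)

lemma E_enc_dec[simp]: "E_enc (E_dec p) = p"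
  by (cases p) (auto simp: E_dec_def split: bool.splits)

instantiation E :: ring
begin
definition zero_E_def: "0 = E0"
definition plus_E_def: "x + y = E_dec (fst (E_enc x) \<noteq> fst (E_enc y), snd (E_enc x) \<noteq> snd (E_enc y))"
definition uminus_E_def: "- (x::E) = x"
definition minus_E_def: "(x::E) - y = x + y"
definition times_E_def: "(x::E) * y = (if y = Kap \<or> y = Tau then x else E0)"
instance
proof
  fix a b c :: E
  show "a + b + c = a + (b + c)"
    by (cases a; cases b; cases c) (simp_all add: plus_E_def E_dec_def)
  show "a + b = b + a"
    by (cases a; cases b) (simp_all add: plus_E_def E_dec_def)
  show "0 + a = a"
    by (cases a) (simp_all add: plus_E_def zero_E_def E_dec_def)
  show "- a + a = 0"
    by (cases a) (simp_all add: plus_E_def zero_E_def uminus_E_def E_dec_def)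
  show "a - b = a + - b" by (simp add: minus_E_def uminus_E_def)
  show "a * b * c = a * (b * c)"
    by (cases a; cases b; cases c) (simp_all add: times_E_def)
  show "(a + b) * c = a * c + b * c"
    by (cases a; cases b; cases c) (simp_all add: times_E_def plus_E_def E_dec_def)
  show "a * (b + c) = a * b + a * c"
    by (cases a; cases b; cases c) (simp_all add: times_E_def plus_E_def E_dec_def)
qed
end

abbreviation kappa :: E where "kappa \<equiv> Kap"
abbreviation tau :: E where "tau \<equiv> Tau"
abbreviation zeta :: E where "zeta \<equiv> Zet"

lemma E_relations:
  "kappa + kappa = 0" "tau + tau = 0" "kappa * kappa = kappa" "tau * tau = tau"
  "kappa * tau = kappa" "tau * kappa = tau" "zeta = kappa + tau"
  "\<And>e::E. e * kappa = e" "\<And>e::E. e * tau = e" "\<And>e::E. e * zeta = 0"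
  "(UNIV :: E set) = {0, kappa, tau, zeta}"
  by (auto simp: times_E_def plus_E_def zero_E_def E_dec_def intro: E.exhaust)

definition E_pi :: "E \<Rightarrow> bool" where "E_pi e = fst (E_enc e)"

definition zeta_scal :: "bool \<Rightarrow> E" where "zeta_scal b = (if b then zeta else 0)"

text \<open>Vectors of length 2n are functions on nat supported in {..<2n};
  the i-th coordinate of (u|v) is u_i for i<n and v_{i-n} for n<=i<2n.\<close>

definition Evecs :: "nat \<Rightarrow> (nat \<Rightarrow> E) set" where
  "Evecs n = {x. \<forall>i\<ge>2*n. x i = 0}"

definition F2vecs :: "nat \<Rightarrow> (nat \<Rightarrow> bool) set" where
  "F2vecs n = {x. \<forall>i\<ge>2*n. x i = False}"

definition E_linear_code :: "nat \<Rightarrow> (nat \<Rightarrow> E) set \<Rightarrow> bool" where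
  "E_linear_code n C \<longleftrightarrow> C \<subseteq> Evecs n \<and> (\<lambda>_. 0) \<in> C
     \<and> (\<forall>x\<in>C. \<forall>y\<in>C. (\<lambda>i. x i + y i) \<in> C)
     \<and> (\<forall>e::E. \<forall>x\<in>C. (\<lambda>i. e * x i) \<in> C)"

definition symp :: "nat \<Rightarrow> (nat \<Rightarrow> E) \<Rightarrow> (nat \<Rightarrow> E) \<Rightarrow> E" where
  "symp n z w = (\<Sum>i<n. z i * w (n + i)) + (\<Sum>i<n. z (n + i) * w i)"

definition perpSL :: "nat \<Rightarrow> (nat \<Rightarrow> E) set \<Rightarrow> (nat \<Rightarrow> E) set" where
  "perpSL n C = {z \<in> Evecs n. \<forall>w\<in>C. symp n z w = 0}"

definition perpSR :: "nat \<Rightarrow> (nat \<Rightarrow> E) set \<Rightarrow> (nat \<Rightarrow> E) set" where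
  "perpSR n C = {z \<in> Evecs n. \<forall>w\<in>C. symp n w z = 0}"

definition perpS :: "nat \<Rightarrow> (nat \<Rightarrow> E) set \<Rightarrow> (nat \<Rightarrow> E) set" where
  "perpS n C = perpSL n C \<inter> perpSR n C"

definition C_Res :: "nat \<Rightarrow> (nat \<Rightarrow> E) set \<Rightarrow> (nat \<Rightarrow> bool) set" where
  "C_Res n C = (\<lambda>x i. E_pi (x i)) ` C"

definition C_Tor :: "nat \<Rightarrow> (nat \<Rightarrow> E) set \<Rightarrow> (nat \<Rightarrow> bool) set" where
  "C_Tor n C = {v \<in> F2vecs n. (\<lambda>i. zeta_scal (v i)) \<in> C}"

definition free_code :: "nat \<Rightarrow> (nat \<Rightarrow> E) set \<Rightarrow> bool" where
  "free_code n C \<longleftrightarrow> C_Res n C = C_Tor n C"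

definition left_symplectic_nice :: "nat \<Rightarrow> (nat \<Rightarrow> E) set \<Rightarrow> bool" where
  "left_symplectic_nice n C \<longleftrightarrow> card C * card (perpSL n C) = card (UNIV :: E set) ^ (2*n)"

end

theory Submission
  imports Defs
begin

text \<open>Write every \<open>z \<in> E\<^sup>2\<^sup>n\<close> as \<open>z = \<kappa> p(z) + \<zeta> q(z)\<close> with binary vectors \<open>p(z), q(z)\<close>.
  Since \<open>e\<kappa> = e\<tau> = e\<close> and \<open>e\<zeta> = 0\<close>, one finds
  \<open>\<langle>z, w\<rangle>\<^sub>s = \<kappa> B(p(z), p(w)) + \<zeta> B(q(z), p(w))\<close> for the binary symplectic form \<open>B\<close>.
  A linear code is \<open>C = {z. p(z) \<in> C\<^sub>R\<^sub>e\<^sub>s, q(z) \<in> C\<^sub>T\<^sub>o\<^sub>r}\<close> with \<open>C\<^sub>R\<^sub>e\<^sub>s \<subseteq> C\<^sub>T\<^sub>o\<^sub>r\<close>, hence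
  the left dual consists of the \<open>z\<close> with \<open>p(z), q(z) \<in> C\<^sub>R\<^sub>e\<^sub>s\<^sup>\<bottom>\<close>, while the right dual only
  asks \<open>p(z) \<in> C\<^sub>T\<^sub>o\<^sub>r\<^sup>\<bottom>\<close>.  So the left dual lies in the right one iff
  \<open>C\<^sub>T\<^sub>o\<^sub>r \<subseteq> C\<^sub>R\<^sub>e\<^sub>s\<close>, i.e. iff \<open>C\<close> is free.  Counting gives
  \<open>|C| |C\<^sup>\<bottom>\<^sup>S\<^sup>L| = |C\<^sub>R\<^sub>e\<^sub>s| |C\<^sub>T\<^sub>o\<^sub>r| |C\<^sub>R\<^sub>e\<^sub>s\<^sup>\<bottom>|\<^sup>2\<close> and \<open>|C\<^sub>R\<^sub>e\<^sub>s| |C\<^sub>R\<^sub>e\<^sub>s\<^sup>\<bottom>| = 2\<^sup>2\<^sup>n\<close>, so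
  \<open>C\<close> is left symplectic nice iff \<open>|C\<^sub>T\<^sub>o\<^sub>r| = |C\<^sub>R\<^sub>e\<^sub>s|\<close>, again iff \<open>C\<close> is free.\<close>

section \<open>Character sums over binary vector spaces\<close>

definition parity_sign :: "bool \<Rightarrow> int" where
  "parity_sign b = (if b then -1 else 1)"

definition vec_xor :: "(nat \<Rightarrow> bool) \<Rightarrow> (nat \<Rightarrow> bool) \<Rightarrow> nat \<Rightarrow> bool" where
  "vec_xor u v = (\<lambda>i. u i \<noteq> v i)"

lemma vec_xor_cancel [simp]: "vec_xor (vec_xor u v) v = u"
  by (auto simp: vec_xor_def)

lemma vec_xor_self [simp]: "vec_xor u u = (\<lambda>_. False)"
  by (simp add: vec_xor_def)

lemma xor_additive_not_zero:
  assumes "\<And>x x'. f (vec_xor x x') = (f x \<noteq> f x')"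
  shows "\<not> f (\<lambda>_. False)"
  using assms[of "\<lambda>_. False" "\<lambda>_. False"] by simp

lemma sum_parity_sign_eq_0_if_involution:
  assumes "finite S" "\<And>x. x \<in> S \<Longrightarrow> f x \<in> S" "\<And>x. x \<in> S \<Longrightarrow> f (f x) = x"
    and "\<And>x. x \<in> S \<Longrightarrow> g (f x) = (\<not> g x)"
  shows "(\<Sum>x\<in>S. parity_sign (g x)) = 0"
proof -
  have "bij_betw f S S"
    by (rule bij_betw_byWitness[of S f f]) (use assms in auto)
  then have "(\<Sum>x\<in>S. parity_sign (g x)) = (\<Sum>x\<in>S. parity_sign (g (f x)))"
    using sum.reindex_bij_betw[of f S S "\<lambda>x. parity_sign (g x)"] by simp
  also have "\<dots> = (\<Sum>x\<in>S. - parity_sign (g x))"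
    by (rule sum.cong) (auto simp: assms parity_sign_def)
  finally show ?thesis
    by (simp add: sum_negf)
qed

lemma sum_parity_sign_additive:
  assumes "finite V" and V_xor: "\<And>x y. x \<in> V \<Longrightarrow> y \<in> V \<Longrightarrow> vec_xor x y \<in> V"
    and f_xor: "\<And>x x'. f (vec_xor x x') = (f x \<noteq> f x')"
  shows "(\<Sum>x\<in>V. parity_sign (f x)) = (if \<forall>x\<in>V. \<not> f x then int (card V) else 0)"
proof (cases "\<forall>x\<in>V. \<not> f x")
  case True
  then show ?thesis
    by (simp add: parity_sign_def)
next
  case False
  then obtain x0 where "x0 \<in> V" "f x0"
    by blast
  then have "(\<Sum>x\<in>V. parity_sign (f x)) = 0"
    by (intro sum_parity_sign_eq_0_if_involution[where f = "\<lambda>x. vec_xor x x0"])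
      (use assms in auto)
  with False show ?thesis
    by auto
qed

lemma card_mult_card_annihilator:
  fixes B :: "(nat \<Rightarrow> bool) \<Rightarrow> (nat \<Rightarrow> bool) \<Rightarrow> bool"
  assumes "finite U" and "V \<subseteq> U" and "(\<lambda>_. False) \<in> V"
    and V_xor: "\<And>x y. x \<in> V \<Longrightarrow> y \<in> V \<Longrightarrow> vec_xor x y \<in> V"
    and U_xor: "\<And>x y. x \<in> U \<Longrightarrow> y \<in> U \<Longrightarrow> vec_xor x y \<in> U"
    and B_left: "\<And>x x' y. B (vec_xor x x') y = (B x y \<noteq> B x' y)"
    and B_right: "\<And>x y y'. B x (vec_xor y y') = (B x y \<noteq> B x y')"
    and nondegenerate: "\<And>x. x \<in> U \<Longrightarrow> x \<noteq> (\<lambda>_. False) \<Longrightarrow> \<exists>y\<in>U. B x y"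
  shows "card V * card {y\<in>U. \<forall>x\<in>V. \<not> B x y} = card U"
proof -
  have "finite V"
    using \<open>finite U\<close> \<open>V \<subseteq> U\<close> finite_subset by blast
  have sum_V: "(\<Sum>x\<in>V. parity_sign (B x y))
      = (if \<forall>x\<in>V. \<not> B x y then int (card V) else 0)" for y
    by (rule sum_parity_sign_additive[OF \<open>finite V\<close>]) (simp_all add: V_xor B_left)
  have sum_U: "(\<Sum>y\<in>U. parity_sign (B x y))
      = (if x = (\<lambda>_. False) then int (card U) else 0)" if "x \<in> V" for x
  proof -
    have "\<not> B (\<lambda>_. False) y" for y
      using xor_additive_not_zero[of "\<lambda>x. B x y", OF B_left] .
    then have "(\<forall>y\<in>U. \<not> B x y) \<longleftrightarrow> x = (\<lambda>_. False)"
      using nondegenerate[of x] \<open>x \<in> V\<close> \<open>V \<subseteq> U\<close> by blast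
    moreover have "(\<Sum>y\<in>U. parity_sign (B x y))
        = (if \<forall>y\<in>U. \<not> B x y then int (card U) else 0)"
      by (rule sum_parity_sign_additive[OF \<open>finite U\<close>]) (simp_all add: U_xor B_right)
    ultimately show ?thesis
      by simp
  qed
  have "int (card V * card {y\<in>U. \<forall>x\<in>V. \<not> B x y})
      = (\<Sum>y\<in>{y\<in>U. \<forall>x\<in>V. \<not> B x y}. int (card V))"
    by simp
  also have "\<dots> = (\<Sum>y\<in>U. if \<forall>x\<in>V. \<not> B x y then int (card V) else 0)"
    by (rule sum.inter_filter[OF \<open>finite U\<close>])
  also have "\<dots> = (\<Sum>y\<in>U. \<Sum>x\<in>V. parity_sign (B x y))"
    by (simp add: sum_V)
  also have "\<dots> = (\<Sum>x\<in>V. \<Sum>y\<in>U. parity_sign (B x y))"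
    by (rule sum.swap)
  also have "\<dots> = (\<Sum>x\<in>V. if x = (\<lambda>_. False) then int (card U) else 0)"
    by (rule sum.cong) (simp_all add: sum_U)
  also have "\<dots> = int (card U)"
    using \<open>finite V\<close> \<open>(\<lambda>_. False) \<in> V\<close> by simp
  finally show ?thesis
    by (simp only: of_nat_eq_iff)
qed

lemma F2vecs_eq_image_Pow: "F2vecs n = (\<lambda>S i. i \<in> S) ` Pow {..<2*n}"
proof (rule set_eqI, rule iffI)
  fix x
  assume "x \<in> F2vecs n"
  then have "x = (\<lambda>i. i \<in> {i. i < 2*n \<and> x i})"
    by (auto simp: F2vecs_def fun_eq_iff) (metis not_le)
  then show "x \<in> (\<lambda>S i. i \<in> S) ` Pow {..<2*n}"
    by blast
qed (auto simp: F2vecs_def)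

lemma finite_F2vecs [simp]: "finite (F2vecs n)"
  by (simp add: F2vecs_eq_image_Pow)

lemma card_F2vecs: "card (F2vecs n) = 2 ^ (2*n)"
proof -
  have "inj_on (\<lambda>S i. i \<in> S) (Pow {..<2*n})"
    by (rule inj_onI) (auto simp: fun_eq_iff)
  then show ?thesis
    by (simp add: F2vecs_eq_image_Pow card_image card_Pow)
qed

lemma vec_xor_F2vecs: "x \<in> F2vecs n \<Longrightarrow> y \<in> F2vecs n \<Longrightarrow> vec_xor x y \<in> F2vecs n"
  by (simp add: F2vecs_def vec_xor_def)

lemma zero_F2vecs [simp]: "(\<lambda>_. False) \<in> F2vecs n"
  by (simp add: F2vecs_def)

lemmas E_defs = times_E_def plus_E_def zero_E_def E_dec_def E_pi_def zeta_scal_def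

lemma E_pi_add: "E_pi (a + b) = (E_pi a \<noteq> E_pi b)"
  by (cases a; cases b) (simp_all add: E_defs)

lemma times_E_eq: "(x::E) * y = (if E_pi y then x else 0)"
  by (cases y) (simp_all add: E_defs)

lemma card_UNIV_E: "card (UNIV :: E set) = 4"
proof -
  have "(UNIV :: E set) = {E0, Kap, Tau, Zet}"
    by (auto intro: E.exhaust)
  moreover have "card {E0, Kap, Tau, Zet} = 4"
    by simp
  ultimately show ?thesis
    by (simp only:)
qed

definition kappa_vec :: "(nat \<Rightarrow> bool) \<Rightarrow> nat \<Rightarrow> E" where
  "kappa_vec u = (\<lambda>i. if u i then kappa else 0)"

definition zeta_vec :: "(nat \<Rightarrow> bool) \<Rightarrow> nat \<Rightarrow> E" where
  "zeta_vec v = (\<lambda>i. zeta_scal (v i))"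

definition kappa_coords :: "(nat \<Rightarrow> E) \<Rightarrow> nat \<Rightarrow> bool" where
  "kappa_coords z = (\<lambda>i. E_pi (z i))"

definition zeta_coords :: "(nat \<Rightarrow> E) \<Rightarrow> nat \<Rightarrow> bool" where
  "zeta_coords z = (\<lambda>i. snd (E_enc (z i)))"

lemma kappa_zeta_decomposition:
  "z = (\<lambda>i. kappa_vec (kappa_coords z) i + zeta_vec (zeta_coords z) i)"
  by (rule ext)
    (case_tac "z i"; simp add: E_defs kappa_vec_def kappa_coords_def zeta_coords_def zeta_vec_def)

lemma kappa_coords_kappa_zeta: "kappa_coords (\<lambda>i. kappa_vec u i + zeta_vec v i) = u"
  by (rule ext) (simp add: kappa_coords_def kappa_vec_def zeta_vec_def E_defs)

lemma zeta_coords_kappa_zeta: "zeta_coords (\<lambda>i. kappa_vec u i + zeta_vec v i) = v"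
  by (rule ext) (simp add: zeta_coords_def kappa_vec_def zeta_vec_def E_defs)

lemma kappa_coords_kappa_vec [simp]: "kappa_coords (kappa_vec u) = u"
  by (rule ext) (simp add: kappa_coords_def kappa_vec_def E_defs)

lemma zeta_coords_kappa_vec [simp]: "zeta_coords (kappa_vec u) = (\<lambda>_. False)"
  by (rule ext) (simp add: zeta_coords_def kappa_vec_def E_defs)

lemma zeta_coords_zeta_vec [simp]: "zeta_coords (zeta_vec v) = v"
  by (rule ext) (simp add: zeta_coords_def zeta_vec_def E_defs)

lemma kappa_coords_Evecs: "z \<in> Evecs n \<Longrightarrow> kappa_coords z \<in> F2vecs n"
  by (simp add: Evecs_def F2vecs_def kappa_coords_def E_pi_def zero_E_def)

lemma zeta_coords_Evecs: "z \<in> Evecs n \<Longrightarrow> zeta_coords z \<in> F2vecs n"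
  by (simp add: Evecs_def F2vecs_def zeta_coords_def zero_E_def)

lemma kappa_vec_Evecs: "u \<in> F2vecs n \<Longrightarrow> kappa_vec u \<in> Evecs n"
  by (simp add: Evecs_def F2vecs_def kappa_vec_def)

lemma kappa_zeta_Evecs:
  "u \<in> F2vecs n \<Longrightarrow> v \<in> F2vecs n \<Longrightarrow> (\<lambda>i. kappa_vec u i + zeta_vec v i) \<in> Evecs n"
  by (simp add: Evecs_def F2vecs_def kappa_vec_def zeta_vec_def zeta_scal_def)

lemma card_Evecs_by_coords:
  assumes "A \<subseteq> F2vecs n" "B \<subseteq> F2vecs n"
  shows "card {z \<in> Evecs n. kappa_coords z \<in> A \<and> zeta_coords z \<in> B} = card A * card B"
proof -
  have "bij_betw (\<lambda>z. (kappa_coords z, zeta_coords z))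
      {z \<in> Evecs n. kappa_coords z \<in> A \<and> zeta_coords z \<in> B} (A \<times> B)"
  proof (rule bij_betw_byWitness[where f' = "\<lambda>(u, v) i. kappa_vec u i + zeta_vec v i"])
    show "(\<lambda>(u, v) i. kappa_vec u i + zeta_vec v i) ` (A \<times> B)
        \<subseteq> {z \<in> Evecs n. kappa_coords z \<in> A \<and> zeta_coords z \<in> B}"
      using assms by (auto intro: kappa_zeta_Evecs simp: kappa_coords_kappa_zeta zeta_coords_kappa_zeta)
  qed (auto simp: kappa_coords_kappa_zeta zeta_coords_kappa_zeta simp flip: kappa_zeta_decomposition)
  then show ?thesis
    by (simp add: bij_betw_same_card card_cartesian_product)
qed

lemma symp_add_left: "symp n (\<lambda>i. z i + z' i) w = symp n z w + symp n z' w"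
  by (simp add: symp_def sum.distrib distrib_right algebra_simps)

lemma symp_scal_left: "symp n (\<lambda>i. e * z i) w = e * symp n z w"
  by (simp add: symp_def sum_distrib_left distrib_left mult.assoc)

lemma symp_kappa_coords_right: "symp n z w = symp n z (kappa_vec (kappa_coords w))"
proof -
  have "x * w i = x * kappa_vec (kappa_coords w) i" for x i
    by (cases "w i") (simp_all add: E_defs kappa_vec_def kappa_coords_def)
  then show ?thesis
    unfolding symp_def by simp
qed

section \<open>The binary symplectic form\<close>

text \<open>Since \<open>\<kappa>\<^sup>2 = \<kappa>\<close>, the vectors over \<open>{0, \<kappa>}\<close> form a copy of \<open>\<bbbF>\<^sub>2\<^sup>2\<^sup>n\<close> inside \<open>E\<^sup>2\<^sup>n\<close>,
  and \<open>sympF2\<close> is the binary symplectic form.\<close>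
definition sympF2 :: "nat \<Rightarrow> (nat \<Rightarrow> bool) \<Rightarrow> (nat \<Rightarrow> bool) \<Rightarrow> bool" where
  "sympF2 n u w = E_pi (symp n (kappa_vec u) (kappa_vec w))"

lemma symp_eq_kappa_zeta:
  "symp n z w = kappa * symp n (kappa_vec (kappa_coords z)) (kappa_vec (kappa_coords w))
    + zeta * symp n (kappa_vec (zeta_coords z)) (kappa_vec (kappa_coords w))"
proof -
  have kappa: "kappa_vec u = (\<lambda>i. kappa * kappa_vec u i)"
    and zeta: "zeta_vec u = (\<lambda>i. zeta * kappa_vec u i)" for u
    by (simp_all add: fun_eq_iff kappa_vec_def zeta_vec_def E_defs)
  have "symp n z w = symp n (\<lambda>i. kappa_vec (kappa_coords z) i + zeta_vec (zeta_coords z) i)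
      (kappa_vec (kappa_coords w))"
    by (subst symp_kappa_coords_right) (simp flip: kappa_zeta_decomposition)
  also have "\<dots> = symp n (\<lambda>i. kappa * kappa_vec (kappa_coords z) i) (kappa_vec (kappa_coords w))
      + symp n (\<lambda>i. zeta * kappa_vec (zeta_coords z) i) (kappa_vec (kappa_coords w))"
    by (simp add: symp_add_left flip: kappa zeta)
  finally show ?thesis
    by (simp only: symp_scal_left)
qed

lemma symp_eq_0_iff:
  "symp n z w = 0 \<longleftrightarrow>
    \<not> sympF2 n (kappa_coords z) (kappa_coords w) \<and> \<not> sympF2 n (zeta_coords z) (kappa_coords w)"
proof -
  have "kappa * a + zeta * b = 0 \<longleftrightarrow> \<not> E_pi a \<and> \<not> E_pi b" for a b :: E
    by (cases a; cases b) (simp_all add: E_defs)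
  then show ?thesis
    unfolding symp_eq_kappa_zeta[of n z w] sympF2_def by simp
qed

lemma sympF2_xor_left: "sympF2 n (vec_xor u u') w = (sympF2 n u w \<noteq> sympF2 n u' w)"
proof -
  have "kappa_vec (vec_xor u u') = (\<lambda>i. kappa_vec u i + kappa_vec u' i)"
    by (rule ext) (simp add: E_defs kappa_vec_def vec_xor_def)
  then show ?thesis
    by (simp add: sympF2_def symp_add_left E_pi_add)
qed

lemma sympF2_commute: "sympF2 n u w = sympF2 n w u"
proof -
  have "kappa_vec u i * kappa_vec w j = kappa_vec w j * kappa_vec u i" for i j
    by (simp add: E_defs kappa_vec_def)
  then have "symp n (kappa_vec u) (kappa_vec w) = symp n (kappa_vec w) (kappa_vec u)"
    unfolding symp_def by (subst add.commute) (simp only:)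
  then show ?thesis
    by (simp add: sympF2_def)
qed

lemma sympF2_xor_right: "sympF2 n w (vec_xor u u') = (sympF2 n w u \<noteq> sympF2 n w u')"
  by (metis sympF2_commute sympF2_xor_left)

lemma sympF2_nondegenerate:
  assumes "u \<in> F2vecs n" "u \<noteq> (\<lambda>_. False)"
  shows "\<exists>w\<in>F2vecs n. sympF2 n u w"
proof -
  obtain j where "u j"
    using assms(2) by auto
  with assms(1) have "j < 2*n"
    unfolding F2vecs_def by (metis (mono_tags, lifting) mem_Collect_eq not_le)
  have mult_kappa_vec: "x * kappa_vec w i = (if w i then x else 0)" for x w i
    by (cases "w i") (simp_all add: times_E_eq kappa_vec_def E_defs)
  have u_j: "kappa_vec u j = kappa"
    using \<open>u j\<close> by (simp add: kappa_vec_def)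
  \<comment> \<open>pair \<open>u\<close> with the unit vector at the coordinate partnered with \<open>j\<close>\<close>
  define j' where "j' = (if j < n then n + j else j - n)"
  have "j' < 2*n"
    using \<open>j < 2*n\<close> by (auto simp: j'_def)
  have "symp n (kappa_vec u) (kappa_vec (\<lambda>i. i = j')) = kappa"
  proof (cases "j < n")
    case True
    have "(\<Sum>i<n. kappa_vec u (n + i) * kappa_vec (\<lambda>i. i = j') i) = 0"
      by (rule sum.neutral) (use True in \<open>auto simp: mult_kappa_vec j'_def\<close>)
    with True u_j show ?thesis
      by (simp add: symp_def mult_kappa_vec j'_def)
  next
    case False
    then have "j - n < n"
      using \<open>j < 2*n\<close> by simp
    have "(\<Sum>i<n. kappa_vec u i * kappa_vec (\<lambda>i. i = j') (n + i)) = 0"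
      by (rule sum.neutral) (use False \<open>j < 2*n\<close> in \<open>auto simp: mult_kappa_vec j'_def\<close>)
    with False \<open>j - n < n\<close> u_j show ?thesis
      by (simp add: symp_def mult_kappa_vec j'_def)
  qed
  moreover have "(\<lambda>i. i = j') \<in> F2vecs n"
    using \<open>j' < 2*n\<close> by (simp add: F2vecs_def)
  ultimately show ?thesis
    by (intro bexI[of _ "\<lambda>i. i = j'"]) (simp_all add: sympF2_def E_pi_def)
qed

definition perpF2 :: "nat \<Rightarrow> (nat \<Rightarrow> bool) set \<Rightarrow> (nat \<Rightarrow> bool) set" where
  "perpF2 n X = {u \<in> F2vecs n. \<forall>x\<in>X. \<not> sympF2 n x u}"

definition F2_subspace :: "nat \<Rightarrow> (nat \<Rightarrow> bool) set \<Rightarrow> bool" where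
  "F2_subspace n V \<longleftrightarrow> V \<subseteq> F2vecs n \<and> (\<lambda>_. False) \<in> V \<and> (\<forall>x\<in>V. \<forall>y\<in>V. vec_xor x y \<in> V)"

lemma F2_subspace_finite: "F2_subspace n V \<Longrightarrow> finite V"
  unfolding F2_subspace_def by (meson finite_F2vecs finite_subset)

lemma F2_subspace_card_pos: "F2_subspace n V \<Longrightarrow> card V > 0"
  unfolding card_gt_0_iff using F2_subspace_finite by (auto simp: F2_subspace_def)

lemma card_mult_card_perpF2:
  assumes "F2_subspace n V"
  shows "card V * card (perpF2 n V) = 2 ^ (2*n)"
  unfolding perpF2_def card_F2vecs[symmetric]
proof (rule card_mult_card_annihilator)
  show "V \<subseteq> F2vecs n" "(\<lambda>_. False) \<in> V" "\<And>x y. x \<in> V \<Longrightarrow> y \<in> V \<Longrightarrow> vec_xor x y \<in> V"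
    using assms by (simp_all add: F2_subspace_def)
qed (simp_all add: vec_xor_F2vecs sympF2_xor_left sympF2_xor_right sympF2_nondegenerate)

lemma F2_subspace_perpF2: "F2_subspace n (perpF2 n X)"
proof -
  have "\<not> sympF2 n x (\<lambda>_. False)" for x
    using xor_additive_not_zero[of "sympF2 n x", OF sympF2_xor_right] .
  then show ?thesis
    by (auto simp: F2_subspace_def perpF2_def vec_xor_F2vecs sympF2_xor_right)
qed

lemma perpF2_antimono: "X \<subseteq> Y \<Longrightarrow> perpF2 n Y \<subseteq> perpF2 n X"
  unfolding perpF2_def by auto

lemma subset_perpF2_perpF2: "X \<subseteq> F2vecs n \<Longrightarrow> X \<subseteq> perpF2 n (perpF2 n X)"
  unfolding perpF2_def using sympF2_commute by blast

lemma perpF2_perpF2: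
  assumes "F2_subspace n V"
  shows "perpF2 n (perpF2 n V) = V"
proof -
  have "card V * card (perpF2 n V) = card (perpF2 n (perpF2 n V)) * card (perpF2 n V)"
    using card_mult_card_perpF2[OF assms] card_mult_card_perpF2[OF F2_subspace_perpF2, of n V]
    by (simp add: mult.commute)
  then have "card V = card (perpF2 n (perpF2 n V))"
    using F2_subspace_card_pos[OF F2_subspace_perpF2[of n V]] by simp
  moreover have "V \<subseteq> perpF2 n (perpF2 n V)"
    using assms subset_perpF2_perpF2 by (simp add: F2_subspace_def)
  ultimately show ?thesis
    using card_subset_eq F2_subspace_finite[OF F2_subspace_perpF2] by metis
qed

lemma perpF2_subset_perpF2_iff:
  assumes "F2_subspace n V" "F2_subspace n W"
  shows "perpF2 n V \<subseteq> perpF2 n W \<longleftrightarrow> W \<subseteq> V"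
  using perpF2_antimono[of "perpF2 n V" "perpF2 n W" n] perpF2_antimono[of W V n]
  by (auto simp: perpF2_perpF2 assms)

section \<open>Linear codes over E\<close>

context
  fixes n :: nat and C :: "(nat \<Rightarrow> E) set"
  assumes linear: "E_linear_code n C"
begin

lemma code_Evecs: "C \<subseteq> Evecs n"
  and code_zero: "(\<lambda>_. 0) \<in> C"
  and code_add: "x \<in> C \<Longrightarrow> y \<in> C \<Longrightarrow> (\<lambda>i. x i + y i) \<in> C"
  and code_scal: "x \<in> C \<Longrightarrow> (\<lambda>i. e * x i) \<in> C"
  using linear by (simp_all add: E_linear_code_def)

lemma C_Res_eq: "C_Res n C = kappa_coords ` C"
  by (simp add: C_Res_def kappa_coords_def[abs_def])

lemma C_Tor_eq: "C_Tor n C = {v \<in> F2vecs n. zeta_vec v \<in> C}"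
  by (simp add: C_Tor_def zeta_vec_def[abs_def])

lemma kappa_vec_kappa_coords_code: "x \<in> C \<Longrightarrow> kappa_vec (kappa_coords x) \<in> C"
  using code_scal[of x kappa]
  by (simp add: times_E_eq kappa_vec_def kappa_coords_def E_defs)

lemma zeta_vec_kappa_coords_code: "x \<in> C \<Longrightarrow> zeta_vec (kappa_coords x) \<in> C"
  using code_scal[of x zeta]
  by (simp add: times_E_eq zeta_vec_def kappa_coords_def E_defs)

lemma zeta_vec_zeta_coords_code: "x \<in> C \<Longrightarrow> zeta_vec (zeta_coords x) \<in> C"
proof -
  assume "x \<in> C"
  have "(\<lambda>i. x i + kappa * x i) = zeta_vec (zeta_coords x)"
    by (rule ext) (case_tac "x i"; simp add: zeta_coords_def zeta_vec_def E_defs)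
  then show ?thesis
    using code_add[OF \<open>x \<in> C\<close> code_scal[OF \<open>x \<in> C\<close>, of kappa]] by simp
qed

lemma C_Res_subset_C_Tor: "C_Res n C \<subseteq> C_Tor n C"
  using zeta_vec_kappa_coords_code kappa_coords_Evecs code_Evecs
  by (auto simp: C_Res_eq C_Tor_eq)

lemma zeta_coords_C_Tor: "x \<in> C \<Longrightarrow> zeta_coords x \<in> C_Tor n C"
  using zeta_vec_zeta_coords_code zeta_coords_Evecs code_Evecs by (auto simp: C_Tor_eq)

lemma code_eq_by_coords:
  "C = {z \<in> Evecs n. kappa_coords z \<in> C_Res n C \<and> zeta_coords z \<in> C_Tor n C}"
proof
  show "C \<subseteq> {z \<in> Evecs n. kappa_coords z \<in> C_Res n C \<and> zeta_coords z \<in> C_Tor n C}"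
    using code_Evecs zeta_coords_C_Tor by (auto simp: C_Res_eq)
  show "{z \<in> Evecs n. kappa_coords z \<in> C_Res n C \<and> zeta_coords z \<in> C_Tor n C} \<subseteq> C"
  proof
    fix z
    assume z: "z \<in> {z \<in> Evecs n. kappa_coords z \<in> C_Res n C \<and> zeta_coords z \<in> C_Tor n C}"
    then obtain x where "x \<in> C" "kappa_coords z = kappa_coords x"
      by (auto simp: C_Res_eq)
    then have "kappa_vec (kappa_coords z) \<in> C"
      using kappa_vec_kappa_coords_code by simp
    moreover have "zeta_vec (zeta_coords z) \<in> C"
      using z by (simp add: C_Tor_eq)
    ultimately show "z \<in> C"
      using code_add kappa_zeta_decomposition[of z] by metis
  qed
qed

lemma F2_subspace_C_Res: "F2_subspace n (C_Res n C)"
proof -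
  have xor: "kappa_coords (\<lambda>i. x i + y i) = vec_xor (kappa_coords x) (kappa_coords y)" for x y
    by (simp add: kappa_coords_def vec_xor_def E_pi_add)
  have "kappa_coords (\<lambda>_. 0) = (\<lambda>_. False)"
    by (simp add: kappa_coords_def E_pi_def zero_E_def)
  then have "(\<lambda>_. False) \<in> kappa_coords ` C"
    using code_zero by (metis image_eqI)
  moreover have "vec_xor a b \<in> kappa_coords ` C"
    if "a \<in> kappa_coords ` C" "b \<in> kappa_coords ` C" for a b
  proof -
    from that obtain x y where "x \<in> C" "y \<in> C" "a = kappa_coords x" "b = kappa_coords y"
      by blast
    then have "vec_xor a b = kappa_coords (\<lambda>i. x i + y i)"
      by (simp add: xor)
    with \<open>x \<in> C\<close> \<open>y \<in> C\<close> show ?thesis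
      using code_add by blast
  qed
  moreover have "kappa_coords ` C \<subseteq> F2vecs n"
    using code_Evecs kappa_coords_Evecs by blast
  ultimately show ?thesis
    unfolding F2_subspace_def C_Res_eq by blast
qed

lemma F2_subspace_C_Tor: "F2_subspace n (C_Tor n C)"
proof -
  have "zeta_vec (vec_xor u v) = (\<lambda>i. zeta_vec u i + zeta_vec v i)" for u v
    by (rule ext) (simp add: zeta_vec_def vec_xor_def E_defs)
  moreover have "zeta_vec (\<lambda>_. False) = (\<lambda>_. 0)"
    by (simp add: zeta_vec_def zeta_scal_def)
  ultimately show ?thesis
    using code_zero code_add by (auto simp: F2_subspace_def C_Tor_eq vec_xor_F2vecs)
qed

lemma perpSL_eq_by_coords:
  "perpSL n C = {z \<in> Evecs n.
     kappa_coords z \<in> perpF2 n (C_Res n C) \<and> zeta_coords z \<in> perpF2 n (C_Res n C)}"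
  using kappa_coords_Evecs zeta_coords_Evecs
  by (auto simp: perpSL_def perpF2_def C_Res_eq symp_eq_0_iff sympF2_commute)

lemma perpSR_eq_by_coords: "perpSR n C = {z \<in> Evecs n. kappa_coords z \<in> perpF2 n (C_Tor n C)}"
proof -
  have "(\<forall>w\<in>C. symp n w z = 0) \<longleftrightarrow> (\<forall>t\<in>C_Tor n C. \<not> sympF2 n t (kappa_coords z))" for z
  proof
    assume "\<forall>w\<in>C. symp n w z = 0"
    then show "\<forall>t\<in>C_Tor n C. \<not> sympF2 n t (kappa_coords z)"
      by (auto simp: C_Tor_eq symp_eq_0_iff dest: bspec[of _ _ "zeta_vec _"])
  next
    assume "\<forall>t\<in>C_Tor n C. \<not> sympF2 n t (kappa_coords z)"
    then show "\<forall>w\<in>C. symp n w z = 0"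
      using C_Res_subset_C_Tor zeta_coords_C_Tor by (auto simp: symp_eq_0_iff C_Res_eq)
  qed
  then show ?thesis
    using kappa_coords_Evecs by (auto simp: perpSR_def perpF2_def)
qed

lemma perpSL_eq_perpS_iff: "perpSL n C = perpS n C \<longleftrightarrow> C_Tor n C \<subseteq> C_Res n C"
proof -
  let ?P = "perpF2 n (C_Res n C)"
  have "perpSL n C \<subseteq> perpSR n C \<longleftrightarrow> ?P \<subseteq> perpF2 n (C_Tor n C)"
  proof
    assume SL_SR: "perpSL n C \<subseteq> perpSR n C"
    show "?P \<subseteq> perpF2 n (C_Tor n C)"
    proof
      fix u
      assume "u \<in> ?P"
      then have "kappa_vec u \<in> perpSL n C"
        using F2_subspace_perpF2[of n "C_Res n C"]
        by (auto simp: perpSL_eq_by_coords F2_subspace_def perpF2_def kappa_vec_Evecs)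
      with SL_SR show "u \<in> perpF2 n (C_Tor n C)"
        by (auto simp: perpSR_eq_by_coords)
    qed
  qed (auto simp: perpSL_eq_by_coords perpSR_eq_by_coords)
  also have "\<dots> \<longleftrightarrow> C_Tor n C \<subseteq> C_Res n C"
    by (rule perpF2_subset_perpF2_iff[OF F2_subspace_C_Res F2_subspace_C_Tor])
  finally show ?thesis
    by (auto simp: perpS_def)
qed

lemma free_code_iff: "free_code n C \<longleftrightarrow> C_Tor n C \<subseteq> C_Res n C"
  using C_Res_subset_C_Tor by (auto simp: free_code_def)

lemma left_symplectic_nice_iff:
  "left_symplectic_nice n C \<longleftrightarrow> card (C_Tor n C) = card (C_Res n C)"
proof -
  let ?R = "card (C_Res n C)" and ?T = "card (C_Tor n C)"
    and ?P = "card (perpF2 n (C_Res n C))"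
  have subsets:
    "C_Res n C \<subseteq> F2vecs n" "C_Tor n C \<subseteq> F2vecs n" "perpF2 n (C_Res n C) \<subseteq> F2vecs n"
    using F2_subspace_C_Res F2_subspace_C_Tor F2_subspace_perpF2 by (auto simp: F2_subspace_def)
  have card_code: "card C = ?R * ?T"
    using card_Evecs_by_coords[OF subsets(1,2)] code_eq_by_coords by simp
  have card_perpSL: "card (perpSL n C) = ?P * ?P"
    using card_Evecs_by_coords[OF subsets(3,3)] perpSL_eq_by_coords by simp
  have "card (UNIV :: E set) ^ (2*n) = (?R * ?P) * (?R * ?P)"
    unfolding card_UNIV_E card_mult_card_perpF2[OF F2_subspace_C_Res]
    using power_mult_distrib[of "2::nat" 2 "2*n"] by simp
  then have "left_symplectic_nice n C \<longleftrightarrow> ?T * (?R * ?P * ?P) = ?R * (?R * ?P * ?P)"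
    unfolding left_symplectic_nice_def card_code card_perpSL by (simp add: mult_ac)
  also have "\<dots> \<longleftrightarrow> ?T = ?R"
    using F2_subspace_card_pos[OF F2_subspace_C_Res]
      F2_subspace_card_pos[OF F2_subspace_perpF2[of n "C_Res n C"]]
    by simp
  finally show ?thesis .
qed

end

theorem mainTheorem10:
  fixes n :: nat and C :: "(nat \<Rightarrow> E) set"
  assumes "E_linear_code n C"
  shows "(perpSL n C = perpS n C \<longleftrightarrow> left_symplectic_nice n C)
       \<and> (perpSL n C = perpS n C \<longleftrightarrow> free_code n C)"
proof -
  have "finite (C_Tor n C)"
    by (rule F2_subspace_finite[OF F2_subspace_C_Tor[OF assms]])
  then have "C_Tor n C \<subseteq> C_Res n C \<longleftrightarrow> card (C_Tor n C) = card (C_Res n C)"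
    using C_Res_subset_C_Tor[OF assms] card_subset_eq[of "C_Tor n C" "C_Res n C"] by auto
  then show ?thesis
    using perpSL_eq_perpS_iff[OF assms] free_code_iff[OF assms] left_symplectic_nice_iff[OF assms]
    by blast
qed

end
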